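(* Let $C$ be a countable torsion abelian group and $A$ a countable abelian group with torsion subgroup $tA$. Then $\mathrm{PExt}(C,tA)$ and $\mathrm{PExt}(C,A)$ are Borel-definably isomorphic.
   Context: For countable $C,A$: $\mathsf Z(C,A)$ is the Polish group (closed in $A^{C\times C}$) of normalized symmetric 2-cocycles ($c(x,0)=0$, $c(x,y)=c(y,x)$, $c(y,z)-c(x+y,z)+c(x,y+z)-c(x,y)=0$), $\mathsf B(C,A)$ the subgroup of coboundaries $c(x,y)=\phi(y)-\phi(x+y)+\phi(x)$, $\mathsf B_{\mathrm w}(C,A)$ the subgroup of cocycles whose restriction to $S\times S$ is a coboundary for every finite $S\le C$; $\mathrm{PExt}(C,A)=\mathsf B_{\mathrm w}(C,A)/\mathsf B(C,A)$, a group with a Polish cover (Polish group modulo Polishable subgroup). A homomorphism between groups with a Polish cover $\hat G/N\to\hat H/M$ is Borel-definable if it is induced by a Borel function $\hat G\to\hat H$; a Borel-definable isomorphism is a bijective Borel-definable homomorphism. *)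

theory Defs
  imports "HOL-Analysis.Analysis"
begin

definition nsmul :: "nat \<Rightarrow> 'a::ab_group_add \<Rightarrow> 'a" where
  "nsmul n a = (\<Sum>i<n. a)"

definition torsion_group :: "'a::ab_group_add itself \<Rightarrow> bool" where
  "torsion_group _ \<longleftrightarrow> (\<forall>x::'a. \<exists>n>0. nsmul n x = 0)"

definition tors :: "'a::ab_group_add set" where
  "tors = {a. \<exists>n>0. nsmul n a = 0}"

definition fin_subgroup :: "'c::ab_group_add set \<Rightarrow> bool" where
  "fin_subgroup F \<longleftrightarrow> finite F \<and> 0 \<in> F \<and> (\<forall>x\<in>F. \<forall>y\<in>F. x + y \<in> F) \<and> (\<forall>x\<in>F. - x \<in> F)"

text \<open>Normalized symmetric 2-cocycles C x C -> S, for S a subgroup of the ambient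
  abelian group (S = UNIV gives Z(C,A), S = tors gives Z(C,tA)).\<close>
definition Zc :: "'a set \<Rightarrow> ('c::ab_group_add \<times> 'c \<Rightarrow> 'a::ab_group_add) set" where
  "Zc S = {c. (\<forall>x y. c (x, y) \<in> S) \<and> (\<forall>x. c (x, 0) = 0) \<and> (\<forall>x y. c (x, y) = c (y, x))
              \<and> (\<forall>x y z. c (y, z) - c (x + y, z) + c (x, y + z) - c (x, y) = 0)}"

definition Bc :: "'a set \<Rightarrow> ('c::ab_group_add \<times> 'c \<Rightarrow> 'a::ab_group_add) set" where
  "Bc S = {c \<in> Zc S. \<exists>\<phi>. (\<forall>x. \<phi> x \<in> S) \<and> (\<forall>x y. c (x, y) = \<phi> y - \<phi> (x + y) + \<phi> x)}"

definition Bw :: "'a set \<Rightarrow> ('c::ab_group_add \<times> 'c \<Rightarrow> 'a::ab_group_add) set" where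
  "Bw S = {c \<in> Zc S. \<forall>F. fin_subgroup F \<longrightarrow>
              (\<exists>\<phi>. (\<forall>x. \<phi> x \<in> S) \<and> (\<forall>x\<in>F. \<forall>y\<in>F. c (x, y) = \<phi> y - \<phi> (x + y) + \<phi> x))}"

text \<open>The Polish space A^(C x C) (A countable discrete, product topology); its Borel
  sigma-algebra is the product sigma-algebra, since C x C is countable.\<close>
definition cocM :: "('c \<times> 'c \<Rightarrow> 'a) measure" where
  "cocM = PiM UNIV (\<lambda>_. count_space UNIV)"

text \<open>f : G -> H (G, H subsets of the Polish space of cocycles, carrying the subspace Borel
  structure) is Borel and induces a bijective group homomorphism G/N -> H/K.\<close>
definition borel_definable_iso ::
  "('c \<times> 'c \<Rightarrow> 'a::ab_group_add) set \<Rightarrow> ('c \<times> 'c \<Rightarrow> 'a) set \<Rightarrow>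
   ('c \<times> 'c \<Rightarrow> 'a) set \<Rightarrow> ('c \<times> 'c \<Rightarrow> 'a) set \<Rightarrow>
   (('c \<times> 'c \<Rightarrow> 'a) \<Rightarrow> ('c \<times> 'c \<Rightarrow> 'a)) \<Rightarrow> bool" where
  "borel_definable_iso G N H K f \<longleftrightarrow>
     f \<in> measurable (restrict_space cocM G) cocM \<and>
     f ` G \<subseteq> H \<and>
     (\<forall>x\<in>G. \<forall>y\<in>G. (\<lambda>i. x i - y i) \<in> N \<longrightarrow> (\<lambda>i. f x i - f y i) \<in> K) \<and>
     (\<forall>x\<in>G. \<forall>y\<in>G. (\<lambda>i. f (\<lambda>j. x j + y j) i - (f x i + f y i)) \<in> K) \<and>
     (\<forall>x\<in>G. f x \<in> K \<longrightarrow> x \<in> N) \<and>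
     (\<forall>z\<in>H. \<exists>x\<in>G. (\<lambda>i. f x i - z i) \<in> K)"

end

theory Submission
  imports Defs
begin

text \<open>The isomorphism is induced by the inclusion of torsion-valued cocycles.
  If \<open>z = \<delta>\<psi>\<close> on a subgroup containing the multiples of an element \<open>c\<close> of order
  \<open>m\<close>, telescoping gives \<open>m \<psi>(c) = \<Sum>k<m. z(c, k c)\<close>. Hence \<open>\<psi>(c)\<close> is determined
  by \<open>z\<close> modulo torsion, and is torsion when \<open>z\<close> is torsion-valued; the latter gives
  injectivity. For surjectivity, choose for each \<open>c\<close> a potential of the weak coboundary
  \<open>z\<close> on some finite subgroup containing \<open>c\<close> and evaluate it at \<open>c\<close>: subtracting the
  coboundary of the resulting function from \<open>z\<close> leaves a cocycle whose potentials on
  finite subgroups are torsion-valued.\<close>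

lemma nsmul_0 [simp]: "nsmul 0 a = 0"
  by (simp add: nsmul_def)

lemma nsmul_Suc: "nsmul (Suc n) a = a + nsmul n a"
  by (simp add: nsmul_def add.commute)

lemma nsmul_1 [simp]: "nsmul (Suc 0) a = a"
  by (simp add: nsmul_def)

lemma nsmul_zero [simp]: "nsmul n (0::'a::ab_group_add) = 0"
  by (simp add: nsmul_def)

lemma nsmul_add: "nsmul (m + n) a = nsmul m a + nsmul n a"
  by (induction m) (simp_all add: nsmul_Suc algebra_simps)

lemma nsmul_mult: "nsmul (m * n) a = nsmul m (nsmul n a)"
  by (induction m) (simp_all add: nsmul_Suc nsmul_add algebra_simps)

lemma nsmul_add_distrib: "nsmul n (a + b) = nsmul n a + nsmul n b"
  by (simp add: nsmul_def sum.distrib)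

lemma nsmul_minus: "nsmul n (- a) = - nsmul n a"
  by (simp add: nsmul_def sum_negf)

lemma nsmul_diff: "nsmul n (a - b) = nsmul n a - nsmul n b"
  by (simp add: nsmul_def sum_subtractf)

lemma nsmul_mult_order: "nsmul m a = 0 \<Longrightarrow> nsmul (k * m) a = 0"
  by (simp add: nsmul_mult)

lemma nsmul_mod_order: "nsmul m a = 0 \<Longrightarrow> nsmul (k mod m) a = nsmul k a"
  by (metis div_mult_mod_eq nsmul_add nsmul_mult_order add_0)

lemma minus_nsmul_order:
  assumes "nsmul m a = 0" "m > 0"
  shows "- nsmul i a = nsmul (i * (m - 1)) a"
proof -
  have "nsmul (i * (m - 1)) a + nsmul i a = nsmul (i * m) a"
    using assms(2) by (simp add: nsmul_add[symmetric] algebra_simps)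
  also have "\<dots> = 0"
    using assms(1) by (simp add: mult.commute nsmul_mult_order)
  finally show ?thesis
    by (metis add.commute minus_unique)
qed

lemma mem_tors_iff: "x \<in> tors \<longleftrightarrow> (\<exists>n>0. nsmul n x = 0)"
  by (simp add: tors_def)

lemma zero_in_tors: "0 \<in> tors"
  by (auto simp: mem_tors_iff intro: exI[of _ 1])

lemma torsion_group_iff: "torsion_group TYPE('a::ab_group_add) \<longleftrightarrow> tors = (UNIV :: 'a set)"
  by (auto simp: torsion_group_def tors_def)

lemma tors_add:
  assumes "x \<in> tors" "y \<in> tors"
  shows "x + y \<in> tors"
proof -
  obtain n m where "n > 0" "nsmul n x = 0" "m > 0" "nsmul m y = 0"
    using assms by (auto simp: mem_tors_iff)
  then have "nsmul (m * n) (x + y) = 0"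
    by (simp add: nsmul_add_distrib nsmul_mult_order) (metis mult.commute nsmul_mult_order)
  with \<open>n > 0\<close> \<open>m > 0\<close> show ?thesis
    by (metis mem_tors_iff nat_0_less_mult_iff)
qed

lemma tors_minus: "x \<in> tors \<Longrightarrow> - x \<in> tors"
  by (auto simp: mem_tors_iff nsmul_minus)

lemma tors_diff: "x \<in> tors \<Longrightarrow> y \<in> tors \<Longrightarrow> x - y \<in> tors"
  using tors_add[of x "- y"] tors_minus[of y] by simp

lemma tors_sum: "(\<And>i. i \<in> I \<Longrightarrow> f i \<in> tors) \<Longrightarrow> sum f I \<in> tors"
  by (induction I rule: infinite_finite_induct) (simp_all add: tors_add zero_in_tors)

lemma tors_nsmul_cancel:
  assumes "m > 0" "nsmul m x \<in> tors"
  shows "x \<in> tors"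
  using assms by (auto simp: mem_tors_iff nsmul_mult[symmetric] intro: exI[of _ "_ * m"])

definition span2 :: "'c::ab_group_add \<Rightarrow> 'c \<Rightarrow> 'c set" where
  "span2 a b = range (\<lambda>(i, j). nsmul i a + nsmul j b)"

lemma nsmul_mem_span2: "nsmul i a + nsmul j b \<in> span2 a b"
  by (auto simp: span2_def)

lemma fin_subgroup_span2:
  assumes "a \<in> tors" "b \<in> tors"
  shows "fin_subgroup (span2 a b)"
proof -
  obtain m n where m: "m > 0" "nsmul m a = 0" and n: "n > 0" "nsmul n b = 0"
    using assms by (auto simp: mem_tors_iff)
  have "span2 a b \<subseteq> (\<lambda>(i, j). nsmul i a + nsmul j b) ` ({..<m} \<times> {..<n})"
  proof
    fix x assume "x \<in> span2 a b"
    then obtain i j where "x = nsmul (i mod m) a + nsmul (j mod n) b"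
      by (auto simp: span2_def nsmul_mod_order m n)
    then show "x \<in> (\<lambda>(i, j). nsmul i a + nsmul j b) ` ({..<m} \<times> {..<n})"
      using m n by force
  qed
  then have "finite (span2 a b)"
    by (rule finite_subset) simp
  moreover have "- x \<in> span2 a b" if "x \<in> span2 a b" for x
  proof -
    obtain i j where "x = nsmul i a + nsmul j b"
      using \<open>x \<in> span2 a b\<close> by (auto simp: span2_def)
    then have "- x = nsmul (i * (m - 1)) a + nsmul (j * (n - 1)) b"
      by (simp add: minus_nsmul_order[OF m(2,1)] minus_nsmul_order[OF n(2,1)])
    then show ?thesis
      by (simp add: nsmul_mem_span2)
  qed
  moreover have "x + y \<in> span2 a b" if x: "x \<in> span2 a b" and y: "y \<in> span2 a b" for x y
  proof -
    obtain i j where "x = nsmul i a + nsmul j b"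
      using x by (auto simp: span2_def)
    moreover obtain i' j' where "y = nsmul i' a + nsmul j' b"
      using y by (auto simp: span2_def)
    ultimately have "x + y = nsmul (i + i') a + nsmul (j + j') b"
      by (simp add: nsmul_add algebra_simps)
    then show ?thesis
      by (simp add: nsmul_mem_span2)
  qed
  moreover have "0 \<in> span2 a b"
    using nsmul_mem_span2[of 0 a 0 b] by simp
  ultimately show ?thesis
    by (simp add: fin_subgroup_def)
qed

lemma nsmul_in_fin_subgroup: "fin_subgroup F \<Longrightarrow> c \<in> F \<Longrightarrow> nsmul k c \<in> F"
  by (induction k) (simp_all add: fin_subgroup_def nsmul_Suc)

definition coboundary :: "('c::ab_group_add \<Rightarrow> 'a::ab_group_add) \<Rightarrow> 'c \<times> 'c \<Rightarrow> 'a" where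
  "coboundary \<phi> = (\<lambda>(x, y). \<phi> y - \<phi> (x + y) + \<phi> x)"

definition coboundary_on ::
    "'c set \<Rightarrow> ('c::ab_group_add \<times> 'c \<Rightarrow> 'a::ab_group_add) \<Rightarrow> ('c \<Rightarrow> 'a) \<Rightarrow> bool" where
  "coboundary_on F z \<psi> \<longleftrightarrow> (\<forall>x\<in>F. \<forall>y\<in>F. z (x, y) = coboundary \<psi> (x, y))"

lemma Zc_values_in: "c \<in> Zc S \<Longrightarrow> c (x, y) \<in> S"
  unfolding Zc_def by blast

lemma Zc_UNIV_into_Zc: "c \<in> Zc UNIV \<Longrightarrow> (\<And>x y. c (x, y) \<in> S) \<Longrightarrow> c \<in> Zc S"
  unfolding Zc_def by blast

lemma mem_Bc_iff: "c \<in> Bc S \<longleftrightarrow> c \<in> Zc S \<and> (\<exists>\<phi>. range \<phi> \<subseteq> S \<and> coboundary_on UNIV c \<phi>)"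
  by (auto simp: Bc_def coboundary_on_def coboundary_def)

lemma mem_Bw_iff:
  "c \<in> Bw S \<longleftrightarrow> c \<in> Zc S \<and> (\<forall>F. fin_subgroup F \<longrightarrow> (\<exists>\<phi>. range \<phi> \<subseteq> S \<and> coboundary_on F c \<phi>))"
  by (auto simp: Bw_def coboundary_on_def coboundary_def image_subset_iff)

lemma Zc_mono: "S \<subseteq> T \<Longrightarrow> Zc S \<subseteq> Zc T"
  by (auto simp: Zc_def)

lemma Bc_mono:
  assumes "S \<subseteq> T"
  shows "Bc S \<subseteq> Bc T"
  unfolding mem_Bc_iff subset_iff using Zc_mono[OF assms] assms by blast

lemma Bw_mono:
  assumes "S \<subseteq> T"
  shows "Bw S \<subseteq> Bw T"
  unfolding mem_Bw_iff subset_iff using Zc_mono[OF assms] assms by blast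

lemma Bw_subset_Zc: "Bw S \<subseteq> Zc S"
  by (auto simp: Bw_def)

lemma zero_in_Bc: "0 \<in> S \<Longrightarrow> (\<lambda>_. 0) \<in> Bc S"
  by (auto simp: Bc_def Zc_def intro!: exI[of _ "\<lambda>_. 0"])

lemma diff_in_Zc:
  assumes "c \<in> Zc UNIV" "d \<in> Zc UNIV"
  shows "(\<lambda>p. c p - d p) \<in> Zc UNIV"
  unfolding Zc_def
proof (intro CollectI conjI allI)
  fix x y w
  have "c (y, w) - c (x + y, w) + c (x, y + w) - c (x, y) = 0"
    and "d (y, w) - d (x + y, w) + d (x, y + w) - d (x, y) = 0"
    using assms unfolding Zc_def by blast+
  moreover have "(c (y, w) - d (y, w)) - (c (x + y, w) - d (x + y, w))
      + (c (x, y + w) - d (x, y + w)) - (c (x, y) - d (x, y))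
      = (c (y, w) - c (x + y, w) + c (x, y + w) - c (x, y))
      - (d (y, w) - d (x + y, w) + d (x, y + w) - d (x, y))"
    by (simp add: algebra_simps)
  ultimately show "(c (y, w) - d (y, w)) - (c (x + y, w) - d (x + y, w))
      + (c (x, y + w) - d (x, y + w)) - (c (x, y) - d (x, y)) = 0"
    by simp
qed (use assms in \<open>auto simp: Zc_def\<close>)

lemma coboundary_in_Zc: "\<phi> 0 = 0 \<Longrightarrow> coboundary \<phi> \<in> Zc UNIV"
  by (simp add: Zc_def coboundary_def algebra_simps)

lemma coboundary_in_Bc: "\<phi> 0 = 0 \<Longrightarrow> coboundary \<phi> \<in> Bc UNIV"
  by (simp add: mem_Bc_iff coboundary_in_Zc coboundary_on_def exI[of _ \<phi>])

lemma coboundary_on_telescope: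
  assumes "coboundary_on F z \<psi>" "\<And>k. nsmul k c \<in> F"
  shows "(\<Sum>k<m. z (c, nsmul k c)) = \<psi> 0 - \<psi> (nsmul m c) + nsmul m (\<psi> c)"
proof (induction m)
  case (Suc m)
  have "c \<in> F"
    using assms(2)[of 1] by simp
  then have "z (c, nsmul m c) = \<psi> (nsmul m c) - \<psi> (c + nsmul m c) + \<psi> c"
    using assms unfolding coboundary_on_def coboundary_def by auto
  then have "(\<Sum>k<Suc m. z (c, nsmul k c))
      = (\<psi> 0 - \<psi> (nsmul m c) + nsmul m (\<psi> c)) + (\<psi> (nsmul m c) - \<psi> (c + nsmul m c) + \<psi> c)"
    using Suc.IH by simp
  then show ?case
    by (simp add: nsmul_Suc algebra_simps)
qed simp

lemma nsmul_potential_eq_sum: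
  assumes "coboundary_on F z \<psi>" "\<And>k. nsmul k c \<in> F" "nsmul m c = 0"
  shows "nsmul m (\<psi> c) = (\<Sum>k<m. z (c, nsmul k c))"
  using coboundary_on_telescope[OF assms(1,2)] assms(3) by simp

lemma potentials_eq_mod_tors:
  assumes "coboundary_on F z \<psi>" "\<And>k. nsmul k c \<in> F"
    and "coboundary_on F' z \<psi>'" "\<And>k. nsmul k c \<in> F'"
    and "c \<in> tors"
  shows "\<psi> c - \<psi>' c \<in> tors"
proof -
  obtain m where "m > 0" "nsmul m c = 0"
    using assms(5) by (auto simp: mem_tors_iff)
  then have "nsmul m (\<psi> c - \<psi>' c) = 0"
    using nsmul_potential_eq_sum[OF assms(1,2)] nsmul_potential_eq_sum[OF assms(3,4)]
    by (simp add: nsmul_diff)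
  with \<open>m > 0\<close> show ?thesis
    by (auto simp: mem_tors_iff)
qed

lemma torsion_valued_coboundary_in_Bc_tors:
  assumes T: "torsion_group TYPE('c::ab_group_add)"
    and x: "x \<in> Zc tors" "(x :: 'c \<times> 'c \<Rightarrow> 'a::ab_group_add) \<in> Bc UNIV"
  shows "x \<in> Bc tors"
proof -
  obtain \<phi> where \<phi>: "coboundary_on UNIV x \<phi>"
    using x(2) by (auto simp: mem_Bc_iff)
  have "range \<phi> \<subseteq> tors"
  proof (rule image_subsetI)
    fix c :: 'c
    obtain m where m: "m > 0" "nsmul m c = 0"
      using T by (auto simp: torsion_group_def)
    have "nsmul m (\<phi> c) = (\<Sum>k<m. x (c, nsmul k c))"
      using nsmul_potential_eq_sum[OF \<phi> _ m(2)] by simp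
    also have "\<dots> \<in> tors"
      using x(1) by (intro tors_sum Zc_values_in)
    finally show "\<phi> c \<in> tors"
      using m(1) tors_nsmul_cancel by blast
  qed
  with x(1) \<phi> show ?thesis
    unfolding mem_Bc_iff by blast
qed

text \<open>The choice is only constrained when \<open>z\<close> is a weak coboundary over a torsion group,
  and even then its value is determined only modulo torsion.\<close>
definition local_potential :: "('c::ab_group_add \<times> 'c \<Rightarrow> 'a::ab_group_add) \<Rightarrow> 'c \<Rightarrow> 'a" where
  "local_potential z c = (SOME p. \<exists>F \<psi>. fin_subgroup F \<and> c \<in> F \<and> coboundary_on F z \<psi> \<and> \<psi> c = p)"

lemma local_potentialE:
  assumes "torsion_group TYPE('c::ab_group_add)" "z \<in> Bw UNIV"
  obtains F \<psi> where "fin_subgroup F" "(c::'c) \<in> F" "coboundary_on F z \<psi>"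
    "\<psi> c = local_potential z c"
proof -
  have F: "fin_subgroup (span2 c c)" "c \<in> span2 c c"
    using assms(1) nsmul_mem_span2[of 1 c 0 c] by (simp_all add: fin_subgroup_span2 torsion_group_iff)
  then obtain \<psi> where "coboundary_on (span2 c c) z \<psi>"
    using assms(2) by (auto simp: mem_Bw_iff)
  with F have "\<exists>p F \<psi>. fin_subgroup F \<and> c \<in> F \<and> coboundary_on F z \<psi> \<and> \<psi> c = p"
    by blast
  from someI_ex[OF this] show ?thesis
    using that by (auto simp: local_potential_def)
qed

lemma potential_minus_local_potential_tors:
  assumes T: "torsion_group TYPE('c::ab_group_add)" and z: "z \<in> Bw UNIV"
    and F: "fin_subgroup F" "coboundary_on F z \<psi>" "(c::'c) \<in> F"
  shows "\<psi> c - local_potential z c \<in> tors"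
proof -
  obtain F' \<psi>' where F': "fin_subgroup F'" "c \<in> F'" "coboundary_on F' z \<psi>'"
      "\<psi>' c = local_potential z c"
    using local_potentialE[OF T z] by metis
  have "c \<in> tors"
    using T by (simp add: torsion_group_iff)
  then show ?thesis
    using potentials_eq_mod_tors[OF F(2) nsmul_in_fin_subgroup[OF F(1,3)]
        F'(3) nsmul_in_fin_subgroup[OF F'(1,2)]] F'(4)
    by simp
qed

lemma local_potential_0:
  assumes "torsion_group TYPE('c::ab_group_add)" "z \<in> Bw UNIV"
  shows "local_potential z (0::'c) = 0"
proof -
  obtain F \<psi> where F: "fin_subgroup F" "(0::'c) \<in> F" "coboundary_on F z \<psi>"
      "\<psi> 0 = local_potential z 0"
    using local_potentialE[OF assms] by metis
  have "z (0, 0) = 0"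
    using assms(2) by (simp add: Bw_def Zc_def)
  moreover have "z (0, 0) = \<psi> 0"
    using F(2,3) by (simp add: coboundary_on_def coboundary_def)
  ultimately show ?thesis
    using F(4) by simp
qed

definition tors_part :: "('c::ab_group_add \<times> 'c \<Rightarrow> 'a::ab_group_add) \<Rightarrow> 'c \<times> 'c \<Rightarrow> 'a" where
  "tors_part z = (\<lambda>p. z p - coboundary (local_potential z) p)"

lemma tors_part_locally_tors_coboundary:
  assumes T: "torsion_group TYPE('c::ab_group_add)" and z: "z \<in> Bw UNIV"
    and F: "fin_subgroup (F :: 'c set)"
  shows "\<exists>\<theta>. range \<theta> \<subseteq> tors \<and> coboundary_on F (tors_part z) \<theta>"
proof -
  obtain \<psi> where \<psi>: "coboundary_on F z \<psi>"
    using z F by (auto simp: mem_Bw_iff)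
  define \<theta> where "\<theta> c = (if c \<in> F then \<psi> c - local_potential z c else 0)" for c
  have "range \<theta> \<subseteq> tors"
    using potential_minus_local_potential_tors[OF T z F \<psi>]
    by (auto simp: \<theta>_def mem_tors_iff intro: exI[of _ 1])
  moreover have "tors_part z (x, y) = coboundary \<theta> (x, y)" if "x \<in> F" "y \<in> F" for x y
  proof -
    have "x + y \<in> F"
      using F that by (simp add: fin_subgroup_def)
    with \<psi> that show ?thesis
      by (simp add: coboundary_on_def coboundary_def tors_part_def \<theta>_def)
  qed
  ultimately show ?thesis
    unfolding coboundary_on_def by blast
qed

lemma tors_part_in_Bw:
  fixes z :: "'c::ab_group_add \<times> 'c \<Rightarrow> 'a::ab_group_add"
  assumes T: "torsion_group TYPE('c)" and z: "z \<in> Bw UNIV"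
  shows "tors_part z \<in> Bw tors"
proof -
  have "tors_part z \<in> Zc UNIV"
    unfolding tors_part_def using z Bw_subset_Zc
    by (intro diff_in_Zc coboundary_in_Zc local_potential_0[OF T z]) blast
  moreover have "tors_part z (a, b) \<in> tors" for a b :: 'c
  proof -
    have F: "fin_subgroup (span2 a b)" "a \<in> span2 a b" "b \<in> span2 a b"
      using T nsmul_mem_span2[of 1 a 0 b] nsmul_mem_span2[of 0 a 1 b]
      by (simp_all add: fin_subgroup_span2 torsion_group_iff)
    obtain \<theta> where \<theta>: "range \<theta> \<subseteq> tors" "coboundary_on (span2 a b) (tors_part z) \<theta>"
      using tors_part_locally_tors_coboundary[OF T z F(1)] by blast
    then have "tors_part z (a, b) = \<theta> b - \<theta> (a + b) + \<theta> a"
      using F(2,3) by (simp add: coboundary_on_def coboundary_def)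
    then show ?thesis
      using \<theta>(1) by (simp add: image_subset_iff tors_add tors_diff)
  qed
  ultimately have "tors_part z \<in> Zc tors"
    by (rule Zc_UNIV_into_Zc)
  then show ?thesis
    using tors_part_locally_tors_coboundary[OF T z] unfolding mem_Bw_iff by blast
qed

lemma tors_part_diff_in_Bc:
  fixes z :: "'c::ab_group_add \<times> 'c \<Rightarrow> 'a::ab_group_add"
  assumes "torsion_group TYPE('c)" "z \<in> Bw UNIV"
  shows "(\<lambda>p. tors_part z p - z p) \<in> Bc UNIV"
proof -
  have "(\<lambda>p. tors_part z p - z p) = coboundary (\<lambda>c. - local_potential z c)"
    by (simp add: fun_eq_iff tors_part_def coboundary_def)
  then show ?thesis
    using coboundary_in_Bc[of "\<lambda>c. - local_potential z c"] local_potential_0[OF assms] by simp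
qed

theorem lemma4p4:
  assumes "torsion_group TYPE('c::{ab_group_add, countable})"
  shows "\<exists>f. borel_definable_iso
            (Bw tors :: ('c \<times> 'c \<Rightarrow> 'a::{ab_group_add, countable}) set) (Bc tors)
            (Bw UNIV) (Bc UNIV) f"
proof
  have Bw: "Bw tors \<subseteq> (Bw UNIV :: ('c \<times> 'c \<Rightarrow> 'a) set)"
    and Bc: "Bc tors \<subseteq> (Bc UNIV :: ('c \<times> 'c \<Rightarrow> 'a) set)"
    by (simp_all add: Bw_mono Bc_mono)
  have "id \<in> measurable (restrict_space cocM (Bw tors)) (cocM :: ('c \<times> 'c \<Rightarrow> 'a) measure)"
    by (simp add: measurable_restrict_space1)
  moreover have "x \<in> Bc tors" if "x \<in> Bw tors" "x \<in> Bc UNIV" for x :: "'c \<times> 'c \<Rightarrow> 'a"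
    using that Bw_subset_Zc torsion_valued_coboundary_in_Bc_tors[OF assms] by blast
  moreover have "\<exists>x\<in>Bw tors. (\<lambda>i. x i - z i) \<in> Bc UNIV"
    if "z \<in> Bw UNIV" for z :: "'c \<times> 'c \<Rightarrow> 'a"
    using that tors_part_in_Bw[OF assms] tors_part_diff_in_Bc[OF assms] by blast
  moreover have "(\<lambda>_. 0) \<in> (Bc UNIV :: ('c \<times> 'c \<Rightarrow> 'a) set)"
    by (simp add: zero_in_Bc)
  ultimately show "borel_definable_iso (Bw tors :: ('c \<times> 'c \<Rightarrow> 'a) set) (Bc tors)
      (Bw UNIV) (Bc UNIV) id"
    using Bw subsetD[OF Bc] unfolding borel_definable_iso_def by simp
qed

end
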